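(* Let $q$ be odd, $n\ge2$, $G=\mathbf{SL}_n(q)$, and let $u\in G$ be unipotent of type $(\lambda_1,\dots,\lambda_k)$ with $\lambda_1>2$. Then the conjugacy class $\mathcal{O}_u$ of $u$ in $G$ is of type D.
   Context: Unipotent type $(\lambda_1\ge\dots\ge\lambda_k)$ = sizes of Jordan blocks. Conjugacy classes are racks with $x\triangleright y=xyx^{-1}$. A subrack $Y$ is decomposable if $Y=R\sqcup S$ with nonempty subracks $R,S$, $Y\triangleright R=R$, $Y\triangleright S=S$. Type D: a decomposable subrack $R\sqcup S$ with $r\in R,s\in S$ and $r\triangleright(s\triangleright(r\triangleright s))\neq s$. *)

theory Defs
  imports "Jordan_Normal_Form.Jordan_Normal_Form"
begin

text \<open>A rack is given by a set X and an operation op (x |> y = op x y).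
  A subrack Y of X is a subset closed under the operation on which every
  left translation op x (x in Y) is a bijection of Y.\<close>

definition subrack :: "('m \<Rightarrow> 'm \<Rightarrow> 'm) \<Rightarrow> 'm set \<Rightarrow> 'm set \<Rightarrow> bool" where
  "subrack op X Y \<longleftrightarrow> Y \<subseteq> X \<and> (\<forall>x\<in>Y. op x ` Y = Y)"

definition decomposition :: "('m \<Rightarrow> 'm \<Rightarrow> 'm) \<Rightarrow> 'm set \<Rightarrow> 'm set \<Rightarrow> 'm set \<Rightarrow> bool" where
  "decomposition op Y R S \<longleftrightarrow>
     Y = R \<union> S \<and> R \<inter> S = {} \<and> R \<noteq> {} \<and> S \<noteq> {} \<and>
     subrack op Y R \<and> subrack op Y S \<and>
     (\<Union>y\<in>Y. op y ` R) = R \<and> (\<Union>y\<in>Y. op y ` S) = S"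

definition rack_type_D :: "('m \<Rightarrow> 'm \<Rightarrow> 'm) \<Rightarrow> 'm set \<Rightarrow> bool" where
  "rack_type_D op X \<longleftrightarrow>
     (\<exists>Y R S. subrack op X Y \<and> decomposition op Y R S \<and>
        (\<exists>r\<in>R. \<exists>s\<in>S. op r (op s (op r s)) \<noteq> s))"

definition SL_mat :: "nat \<Rightarrow> 'a :: field mat set" where
  "SL_mat n = {A \<in> carrier_mat n n. det A = 1}"

definition mat_inv :: "'a :: field mat \<Rightarrow> 'a mat" where
  "mat_inv A = (THE B. B \<in> carrier_mat (dim_row A) (dim_row A) \<and>
                        A * B = 1\<^sub>m (dim_row A) \<and> B * A = 1\<^sub>m (dim_row A))"

definition conj_mat :: "'a :: field mat \<Rightarrow> 'a mat \<Rightarrow> 'a mat" where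
  "conj_mat x y = x * y * mat_inv x"

definition conj_class_SL :: "nat \<Rightarrow> 'a :: field mat \<Rightarrow> 'a mat set" where
  "conj_class_SL n u = {conj_mat g u | g. g \<in> SL_mat n}"

definition unipotent_of_type :: "nat \<Rightarrow> 'a :: field mat \<Rightarrow> nat list \<Rightarrow> bool" where
  "unipotent_of_type n u lam \<longleftrightarrow>
     u \<in> carrier_mat n n \<and> lam \<noteq> [] \<and> sorted_wrt (\<ge>) lam \<and>
     jordan_nf u (map (\<lambda>l. (l, 1)) lam)"

end

theory Submission
  imports Defs "HOL-Number_Theory.Residues"
begin

text \<open>Conjugating the Jordan form of \<open>u\<close> by two diagonal matrices, with determinants chosen to
  compensate the similarity so as to stay in \<open>SL\<^sub>n\<close>, gives elements \<open>r\<close>, \<open>s\<close> of the class that are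
  upper unitriangular with superdiagonal entries \<open>r\<^sub>0\<^sub>1 = s\<^sub>0\<^sub>1 = c \<noteq> 0\<close>, \<open>r\<^sub>1\<^sub>2 = 1\<close>, \<open>s\<^sub>1\<^sub>2 = -1\<close>;
  this is where a Jordan block of size at least 3 is needed. Conjugation by the unitriangular group
  \<open>U\<close> fixes the superdiagonal, so for odd \<open>q\<close> the \<open>U\<close>-orbits \<open>R\<close> of \<open>r\<close> and \<open>S\<close> of \<open>s\<close> are disjoint, and
  both are invariant under every element of \<open>R \<union> S \<subseteq> U\<close>. Finally \<open>r \<triangleright> (s \<triangleright> (r \<triangleright> s)) = s\<close> would make
  \<open>w = r s r\<close> commute with \<open>s\<close>, and comparing \<open>(0,2)\<close>-entries gives \<open>r\<^sub>0\<^sub>1 s\<^sub>1\<^sub>2 = s\<^sub>0\<^sub>1 r\<^sub>1\<^sub>2\<close>,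
  i.e. \<open>c = -c\<close>.\<close>

lemma mat_inv_eqI:
  assumes A: "A \<in> carrier_mat n n" and B: "B \<in> carrier_mat n n" and AB: "A * B = 1\<^sub>m n"
  shows "mat_inv A = B"
  unfolding mat_inv_def
proof (rule the_equality)
  show "B \<in> carrier_mat (dim_row A) (dim_row A) \<and> A * B = 1\<^sub>m (dim_row A) \<and> B * A = 1\<^sub>m (dim_row A)"
    using A B AB mat_mult_left_right_inverse[OF A B AB] by simp
next
  fix C assume C: "C \<in> carrier_mat (dim_row A) (dim_row A) \<and> A * C = 1\<^sub>m (dim_row A) \<and> C * A = 1\<^sub>m (dim_row A)"
  then have "C \<in> carrier_mat n n" "C * A = 1\<^sub>m n" using A by auto
  then have "C = C * (A * B)" using AB by simp
  also have "\<dots> = C * A * B" using A B \<open>C \<in> carrier_mat n n\<close> by (simp add: assoc_mult_mat)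
  finally show "C = B" using \<open>C * A = 1\<^sub>m n\<close> B by simp
qed

lemma mat_inv:
  assumes A: "A \<in> carrier_mat n n" and "det A \<noteq> 0"
  shows "mat_inv A \<in> carrier_mat n n" "A * mat_inv A = 1\<^sub>m n" "mat_inv A * A = 1\<^sub>m n"
proof -
  define B where "B = inverse (det A) \<cdot>\<^sub>m adj_mat A"
  have B: "B \<in> carrier_mat n n" "A * B = 1\<^sub>m n"
  proof -
    have "A * B = inverse (det A) \<cdot>\<^sub>m (det A \<cdot>\<^sub>m 1\<^sub>m n)"
      using adj_mat[OF A] A by (simp add: B_def mult_smult_distrib)
    then show "B \<in> carrier_mat n n" "A * B = 1\<^sub>m n"
      using adj_mat[OF A] \<open>det A \<noteq> 0\<close> by (auto intro!: eq_matI simp: B_def)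
  qed
  then have "mat_inv A = B" by (rule mat_inv_eqI[OF A])
  then show "mat_inv A \<in> carrier_mat n n" "A * mat_inv A = 1\<^sub>m n" "mat_inv A * A = 1\<^sub>m n"
    using B mat_mult_left_right_inverse[OF A] by auto
qed

lemma mat_inv_mult:
  assumes x: "x \<in> carrier_mat n n" "det x \<noteq> 0" and y: "y \<in> carrier_mat n n" "det y \<noteq> 0"
  shows "mat_inv (x * y) = mat_inv y * mat_inv x"
proof (rule mat_inv_eqI[of _ n])
  note xi = mat_inv[OF x] and yi = mat_inv[OF y]
  have "x * y * (mat_inv y * mat_inv x) = x * ((y * mat_inv y) * mat_inv x)"
    using x y xi(1) yi(1) by (simp add: assoc_mult_mat[of _ n n _ n _ n])
  also have "\<dots> = 1\<^sub>m n" using x xi yi by simp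
  finally show "x * y * (mat_inv y * mat_inv x) = 1\<^sub>m n" .
qed (use x y mat_inv[OF x] mat_inv[OF y] in auto)

lemma mat_inv_one: "mat_inv (1\<^sub>m n :: 'a :: field mat) = 1\<^sub>m n"
  by (rule mat_inv_eqI) auto

lemma conj_mat_carrier:
  "x \<in> carrier_mat n n \<Longrightarrow> det x \<noteq> 0 \<Longrightarrow> z \<in> carrier_mat n n \<Longrightarrow> conj_mat x z \<in> carrier_mat n n"
  using mat_inv(1)[of x n] by (simp add: conj_mat_def)

lemma conj_mat_one: "z \<in> carrier_mat n n \<Longrightarrow> conj_mat (1\<^sub>m n) z = z"
  by (simp add: conj_mat_def mat_inv_one)

lemma conj_mat_mult:
  assumes x: "x \<in> carrier_mat n n" "det x \<noteq> 0" and y: "y \<in> carrier_mat n n" "det y \<noteq> 0"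
    and z: "z \<in> carrier_mat n n"
  shows "conj_mat x (conj_mat y z) = conj_mat (x * y) z"
  unfolding conj_mat_def mat_inv_mult[OF x y]
  using x y z mat_inv(1)[OF x] mat_inv(1)[OF y] by (simp add: assoc_mult_mat[of _ n n _ n _ n])

lemma conj_mat_eq_iff:
  assumes x: "x \<in> carrier_mat n n" "det x \<noteq> 0" and z: "z \<in> carrier_mat n n" and y: "y \<in> carrier_mat n n"
  shows "conj_mat x z = y \<longleftrightarrow> x * z = y * x"
proof
  assume "conj_mat x z = y"
  then have "y * x = x * z * (mat_inv x * x)"
    using x z mat_inv(1)[OF x] by (auto simp: conj_mat_def assoc_mult_mat[of _ n n _ n _ n])
  then show "x * z = y * x" using x z mat_inv(3)[OF x] by simp
next
  assume "x * z = y * x"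
  then have "conj_mat x z = y * (x * mat_inv x)"
    using x y mat_inv(1)[OF x] by (simp add: conj_mat_def assoc_mult_mat[of _ n n _ n _ n])
  then show "conj_mat x z = y" using y mat_inv(2)[OF x] by simp
qed

lemma SL_matD: "g \<in> SL_mat n \<Longrightarrow> g \<in> carrier_mat n n \<and> det g \<noteq> 0"
  by (simp add: SL_mat_def)

lemma SL_mat_mult: "g \<in> SL_mat n \<Longrightarrow> h \<in> SL_mat n \<Longrightarrow> g * h \<in> SL_mat n"
  by (auto simp: SL_mat_def det_mult[of g n h])

lemma conj_mat_mem_conj_class_SL:
  assumes g: "g \<in> SL_mat n" and y: "y \<in> conj_class_SL n u" and u: "u \<in> carrier_mat n n"
  shows "conj_mat g y \<in> conj_class_SL n u"
proof -
  obtain h where h: "h \<in> SL_mat n" "y = conj_mat h u" using y by (auto simp: conj_class_SL_def)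
  then have "conj_mat g y = conj_mat (g * h) u"
    using conj_mat_mult u SL_matD[OF g] SL_matD[OF h(1)] by blast
  then show ?thesis using SL_mat_mult[OF g h(1)] by (auto simp: conj_class_SL_def)
qed

lemma similar_mat_conj_mat:
  assumes "similar_mat u J" and u: "u \<in> carrier_mat n n"
  obtains Q where "Q \<in> carrier_mat n n" "det Q \<noteq> 0" "conj_mat Q u = J"
proof -
  obtain m P Q where PQ: "{u, J, P, Q} \<subseteq> carrier_mat m m" "P * Q = 1\<^sub>m m" "Q * P = 1\<^sub>m m" "u = P * J * Q"
    using similar_matD[OF assms(1)] by blast
  have "m = n" using PQ(1) u by auto
  with PQ have c: "J \<in> carrier_mat n n" "P \<in> carrier_mat n n" "Q \<in> carrier_mat n n"
    and QP: "Q * P = 1\<^sub>m n" by auto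
  have "det Q * det P = 1" using det_mult[of Q n P] c QP by simp
  then have dQ: "det Q \<noteq> 0" by auto
  have "mat_inv Q = P" by (rule mat_inv_eqI[OF c(3,2) QP])
  then have "conj_mat Q u = (Q * P) * J * (Q * P)"
    using c by (simp add: conj_mat_def PQ(4) assoc_mult_mat[of _ n n _ n _ n])
  then have "conj_mat Q u = J" using c QP by simp
  then show thesis using that c(3) dQ by blast
qed

lemma det_mat_diag: "det (mat_diag n d :: 'a :: comm_ring_1 mat) = prod d {0..<n}"
proof -
  have "det (mat_diag n d) = prod_list (diag_mat (mat_diag n d))"
    by (rule det_upper_triangular[of _ n]) (auto simp: mat_diag_def)
  also have "diag_mat (mat_diag n d) = map d [0..<n]"
    by (auto simp: diag_mat_def mat_diag_def)
  finally show ?thesis by (simp add: prod.distinct_set_conv_list[symmetric])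
qed

lemma conj_mat_diag_index:
  fixes z :: "'a :: field mat"
  assumes d: "\<And>i. i < n \<Longrightarrow> d i \<noteq> 0" and z: "z \<in> carrier_mat n n" and "i < n" "j < n"
  shows "conj_mat (mat_diag n d) z $$ (i, j) = d i * z $$ (i, j) / d j"
proof -
  have "mat_diag n d * mat_diag n (\<lambda>i. inverse (d i)) = 1\<^sub>m n"
    unfolding mat_diag_diag using d by (auto intro!: eq_matI simp: mat_diag_def)
  then have "mat_inv (mat_diag n d) = mat_diag n (\<lambda>i. inverse (d i))"
    by (intro mat_inv_eqI) auto
  then show ?thesis
    using assms by (simp add: conj_mat_def mat_diag_mult_left[OF z] mat_diag_mult_right[of _ n] divide_inverse)
qed

lemma similar_mat_diag_conj_mem_conj_class_SL:
  fixes u :: "'a :: field mat"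
  assumes u: "u \<in> carrier_mat n n" and "similar_mat u J"
  obtains c where "c \<noteq> 0"
    "\<And>d. (\<And>i. i < n \<Longrightarrow> d i \<noteq> 0) \<Longrightarrow> prod d {0..<n} = c
      \<Longrightarrow> conj_mat (mat_diag n d) J \<in> conj_class_SL n u"
proof -
  obtain Q where Q: "Q \<in> carrier_mat n n" "det Q \<noteq> 0" "conj_mat Q u = J"
    using similar_mat_conj_mat[OF assms(2) u] by blast
  show thesis
  proof
    show "inverse (det Q) \<noteq> 0" using Q(2) by simp
    fix d assume d: "\<And>i. i < n \<Longrightarrow> d i \<noteq> 0" and "prod d {0..<n} = inverse (det Q)"
    then have det_D: "det (mat_diag n d) = inverse (det Q)" by (simp add: det_mat_diag)
    have "mat_diag n d * Q \<in> SL_mat n"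
      using Q det_D det_mult[of "mat_diag n d" n Q] mult_carrier_mat[OF mat_diag_dim Q(1)]
      by (simp add: SL_mat_def)
    moreover have "conj_mat (mat_diag n d) J = conj_mat (mat_diag n d * Q) u"
      using conj_mat_mult[of "mat_diag n d" n Q u] Q det_D u by simp
    ultimately show "conj_mat (mat_diag n d) J \<in> conj_class_SL n u"
      by (auto simp: conj_class_SL_def)
  qed
qed

definition unitriangular_mat :: "nat \<Rightarrow> 'a :: semiring_1 mat set" where
  "unitriangular_mat n = {A \<in> carrier_mat n n. upper_triangular A \<and> (\<forall>i<n. A $$ (i, i) = 1)}"

lemma unitriangular_matD:
  assumes "A \<in> unitriangular_mat n"
  shows "A \<in> carrier_mat n n" "upper_triangular A" "\<And>i j. j < i \<Longrightarrow> i < n \<Longrightarrow> A $$ (i, j) = 0"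
    "\<And>i. i < n \<Longrightarrow> A $$ (i, i) = 1"
  using assms by (auto simp: unitriangular_mat_def)

lemma upper_triangular_mult_index:
  assumes A: "A \<in> carrier_mat n n" "upper_triangular A" and B: "B \<in> carrier_mat n nc"
    and "i < n" "j < nc"
  shows "(A * B) $$ (i, j) = (\<Sum>k\<in>{i..<n}. A $$ (i, k) * B $$ (k, j))"
proof -
  have "(A * B) $$ (i, j) = (\<Sum>k\<in>{0..<n}. A $$ (i, k) * B $$ (k, j))"
    using assms by (simp add: scalar_prod_def)
  also have "\<dots> = (\<Sum>k\<in>{i..<n}. A $$ (i, k) * B $$ (k, j))"
    by (rule sum.mono_neutral_right) (use A \<open>i < n\<close> in \<open>auto simp: upper_triangularD\<close>)
  finally show ?thesis .
qed

lemma unitriangular_mult_index: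
  assumes A: "A \<in> unitriangular_mat n" and B: "B \<in> unitriangular_mat n" and "i \<le> j" "j < n"
  shows "(A * B) $$ (i, j) = (\<Sum>k\<in>{i..j}. A $$ (i, k) * B $$ (k, j))"
proof -
  have "(A * B) $$ (i, j) = (\<Sum>k\<in>{i..<n}. A $$ (i, k) * B $$ (k, j))"
    using assms by (intro upper_triangular_mult_index) (auto dest: unitriangular_matD)
  also have "\<dots> = (\<Sum>k\<in>{i..j}. A $$ (i, k) * B $$ (k, j))"
    by (rule sum.mono_neutral_right) (use B \<open>j < n\<close> in \<open>auto simp: unitriangular_matD(3)[OF B]\<close>)
  finally show ?thesis .
qed

lemma unitriangular_mult:
  assumes A: "A \<in> unitriangular_mat n" and B: "B \<in> unitriangular_mat n"
  shows "A * B \<in> unitriangular_mat n"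
proof -
  have "(A * B) $$ (i, j) = 0" if "j < i" "i < n" for i j
    using upper_triangular_mult_index[OF unitriangular_matD(1,2)[OF A] unitriangular_matD(1)[OF B]] that
    by (auto intro!: sum.neutral simp: unitriangular_matD(3)[OF B])
  moreover have "(A * B) $$ (i, i) = 1" if "i < n" for i
    using unitriangular_mult_index[OF A B order_refl that] that
    by (simp add: unitriangular_matD(4)[OF A] unitriangular_matD(4)[OF B])
  ultimately show ?thesis
    using A B by (auto simp: unitriangular_mat_def)
qed

lemma one_unitriangular_mat: "1\<^sub>m n \<in> unitriangular_mat n"
  by (auto simp: unitriangular_mat_def)

lemma det_unitriangular_mat:
  assumes A: "(A :: 'a :: comm_ring_1 mat) \<in> unitriangular_mat n"
  shows "det A = 1"
proof -
  have "diag_mat A = replicate n 1"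
    using unitriangular_matD(1,4)[OF A] by (intro nth_equalityI) (auto simp: diag_mat_def)
  then show ?thesis
    using det_upper_triangular[OF unitriangular_matD(2,1)[OF A]] by simp
qed

lemma right_inverse_unitriangular_mat:
  assumes A: "A \<in> unitriangular_mat n" and B: "B \<in> carrier_mat n n" and AB: "A * B = 1\<^sub>m n"
  shows "B \<in> unitriangular_mat n"
proof -
  have "B $$ (i, j) = (if i = j then 1 else 0)" if "i < n" "j \<le> i" for i j
    using that
  proof (induction "n - i" arbitrary: i rule: less_induct)
    case less
    have below: "B $$ (k, j) = 0" if "k \<in> {i<..<n}" for k
      using less.hyps[of k] that less.prems by auto
    have "(if i = j then 1 else 0) = (A * B) $$ (i, j)"
      using AB less.prems by auto
    also have "\<dots> = (\<Sum>k\<in>{i..<n}. A $$ (i, k) * B $$ (k, j))"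
      using less.prems A B by (intro upper_triangular_mult_index) (auto dest: unitriangular_matD)
    also have "\<dots> = (\<Sum>k\<in>{i}. A $$ (i, k) * B $$ (k, j))"
      by (rule sum.mono_neutral_right) (use less.prems below in auto)
    also have "\<dots> = B $$ (i, j)"
      using A less.prems by (simp add: unitriangular_matD(4))
    finally show ?case by simp
  qed
  then show ?thesis
    using B by (auto simp: unitriangular_mat_def)
qed

lemma unitriangular_mat_invertible:
  assumes "(A :: 'a :: field mat) \<in> unitriangular_mat n"
  shows "A \<in> carrier_mat n n" "det A \<noteq> 0"
  using assms by (simp_all add: det_unitriangular_mat unitriangular_matD(1))

lemma mat_inv_unitriangular_mat:
  assumes A: "(A :: 'a :: field mat) \<in> unitriangular_mat n"
  shows "mat_inv A \<in> unitriangular_mat n"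
  using right_inverse_unitriangular_mat[OF A] mat_inv(1,2) unitriangular_mat_invertible[OF A] by blast

lemma unitriangular_mult_superdiag:
  assumes A: "A \<in> unitriangular_mat n" and B: "B \<in> unitriangular_mat n" and "Suc i < n"
  shows "(A * B) $$ (i, Suc i) = A $$ (i, Suc i) + B $$ (i, Suc i)"
proof -
  have "{i..Suc i} = {i, Suc i}" by auto
  then show ?thesis
    using unitriangular_mult_index[OF A B, of i "Suc i"] assms
    by (simp add: unitriangular_matD(4) add.commute)
qed

lemma unitriangular_mult_superdiag2:
  assumes A: "A \<in> unitriangular_mat n" and B: "B \<in> unitriangular_mat n" and "Suc (Suc i) < n"
  shows "(A * B) $$ (i, Suc (Suc i))
    = A $$ (i, Suc (Suc i)) + A $$ (i, Suc i) * B $$ (Suc i, Suc (Suc i)) + B $$ (i, Suc (Suc i))"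
proof -
  have "{i..Suc (Suc i)} = {i, Suc i, Suc (Suc i)}" by auto
  then show ?thesis
    using unitriangular_mult_index[OF A B, of i "Suc (Suc i)"] assms
    by (simp add: unitriangular_matD(4) algebra_simps)
qed

lemma unitriangular_commute_superdiag:
  fixes A B :: "'a :: ring_1 mat"
  assumes A: "A \<in> unitriangular_mat n" and B: "B \<in> unitriangular_mat n" and "Suc (Suc i) < n"
    and "A * B = B * A"
  shows "A $$ (i, Suc i) * B $$ (Suc i, Suc (Suc i)) = B $$ (i, Suc i) * A $$ (Suc i, Suc (Suc i))"
  using arg_cong[OF \<open>A * B = B * A\<close>, of "\<lambda>C. C $$ (i, Suc (Suc i))"]
  by (simp add: unitriangular_mult_superdiag2[OF A B] unitriangular_mult_superdiag2[OF B A]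
      \<open>Suc (Suc i) < n\<close> algebra_simps)

lemma unitriangular_mat_SL: "g \<in> unitriangular_mat n \<Longrightarrow> g \<in> SL_mat n"
  by (simp add: SL_mat_def det_unitriangular_mat unitriangular_matD(1))

lemma conj_mat_diag_unitriangular:
  fixes z :: "'a :: field mat"
  assumes d: "\<And>i. i < n \<Longrightarrow> d i \<noteq> 0" and z: "z \<in> unitriangular_mat n"
  shows "conj_mat (mat_diag n d) z \<in> unitriangular_mat n"
  using d conj_mat_carrier[of "mat_diag n d" n z] unitriangular_matD[OF z]
  by (auto simp: unitriangular_mat_def conj_mat_diag_index det_mat_diag)

lemma conj_mat_unitriangular:
  "g \<in> unitriangular_mat n \<Longrightarrow> z \<in> unitriangular_mat n \<Longrightarrow> conj_mat g z \<in> unitriangular_mat n"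
  unfolding conj_mat_def by (intro unitriangular_mult mat_inv_unitriangular_mat)

definition unitriangular_orbit :: "nat \<Rightarrow> 'a :: field mat \<Rightarrow> 'a mat set" where
  "unitriangular_orbit n z = {conj_mat g z | g. g \<in> unitriangular_mat n}"

lemma unitriangular_orbit_self: "z \<in> carrier_mat n n \<Longrightarrow> z \<in> unitriangular_orbit n z"
  unfolding unitriangular_orbit_def
  by (rule CollectI, rule exI[of _ "1\<^sub>m n"]) (simp add: conj_mat_one one_unitriangular_mat)

lemma unitriangular_orbit_subset:
  "z \<in> unitriangular_mat n \<Longrightarrow> unitriangular_orbit n z \<subseteq> unitriangular_mat n"
  by (auto simp: unitriangular_orbit_def conj_mat_unitriangular)

lemma unitriangular_orbit_subset_conj_class_SL:
  assumes "z \<in> conj_class_SL n u" "u \<in> carrier_mat n n"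
  shows "unitriangular_orbit n z \<subseteq> conj_class_SL n u"
proof
  fix y assume "y \<in> unitriangular_orbit n z"
  then obtain g where "g \<in> unitriangular_mat n" "y = conj_mat g z"
    by (auto simp: unitriangular_orbit_def)
  then show "y \<in> conj_class_SL n u"
    using conj_mat_mem_conj_class_SL[OF unitriangular_mat_SL assms] by simp
qed

lemma conj_mat_image_unitriangular_orbit:
  assumes x: "x \<in> unitriangular_mat n" and z: "z \<in> carrier_mat n n"
  shows "conj_mat x ` unitriangular_orbit n z = unitriangular_orbit n z"
proof -
  note x_inv = unitriangular_mat_invertible[OF x]
  have conj_x: "conj_mat x (conj_mat g z) = conj_mat (x * g) z" if "g \<in> unitriangular_mat n" for g
    using conj_mat_mult x_inv unitriangular_mat_invertible[OF that] z by blast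
  show ?thesis
  proof
    show "conj_mat x ` unitriangular_orbit n z \<subseteq> unitriangular_orbit n z"
      using conj_x unitriangular_mult[OF x] by (auto simp: unitriangular_orbit_def)
  next
    show "unitriangular_orbit n z \<subseteq> conj_mat x ` unitriangular_orbit n z"
    proof
      fix y assume "y \<in> unitriangular_orbit n z"
      then obtain g where g: "g \<in> unitriangular_mat n" "y = conj_mat g z"
        by (auto simp: unitriangular_orbit_def)
      define h where "h = mat_inv x * g"
      have h: "h \<in> unitriangular_mat n"
        unfolding h_def by (intro unitriangular_mult mat_inv_unitriangular_mat x g(1))
      have "x * h = x * mat_inv x * g"
        using x_inv mat_inv(1)[of x n] unitriangular_matD(1)[OF g(1)]
        by (simp add: h_def assoc_mult_mat[of x n n _ n _ n])
      then have "x * h = g"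
        using mat_inv(2)[of x n] x_inv unitriangular_matD(1)[OF g(1)] by simp
      then have "y = conj_mat x (conj_mat h z)" using conj_x[OF h] g(2) by simp
      moreover have "conj_mat h z \<in> unitriangular_orbit n z"
        using h by (auto simp: unitriangular_orbit_def)
      ultimately show "y \<in> conj_mat x ` unitriangular_orbit n z" by blast
    qed
  qed
qed

lemma unitriangular_orbit_superdiag:
  assumes y: "y \<in> unitriangular_orbit n z" and z: "z \<in> unitriangular_mat n" and "Suc i < n"
  shows "y $$ (i, Suc i) = z $$ (i, Suc i)"
proof -
  obtain g where g: "g \<in> unitriangular_mat n" "conj_mat g z = y"
    using y by (auto simp: unitriangular_orbit_def)
  have y_UT: "y \<in> unitriangular_mat n" using unitriangular_orbit_subset[OF z] y by blast
  have "g * z = y * g"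
    using conj_mat_eq_iff[of g n z y] g unitriangular_mat_invertible[OF g(1)]
      unitriangular_matD(1)[OF z] unitriangular_matD(1)[OF y_UT] by blast
  then have "(g * z) $$ (i, Suc i) = (y * g) $$ (i, Suc i)" by simp
  then show ?thesis
    using unitriangular_mult_superdiag[OF g(1) z] unitriangular_mult_superdiag[OF y_UT g(1)] \<open>Suc i < n\<close>
    by (simp add: add.commute)
qed

lemma rack_type_D_if_invariant_parts:
  assumes "R \<union> S \<subseteq> X" "R \<inter> S = {}" "r \<in> R" "s \<in> S"
    and "\<And>y. y \<in> R \<union> S \<Longrightarrow> op y ` R = R" "\<And>y. y \<in> R \<union> S \<Longrightarrow> op y ` S = S"
    and "op r (op s (op r s)) \<noteq> s"
  shows "rack_type_D op X"
  unfolding rack_type_D_def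
proof (intro exI conjI)
  show "subrack op X (R \<union> S)"
    using assms(1,5,6) by (auto simp: subrack_def image_Un)
  show "decomposition op (R \<union> S) R S"
    using assms(2-6) by (auto simp: decomposition_def subrack_def)
qed (use assms(3,4,7) in blast)

lemma conj_mat_braid_unitriangular_ne:
  fixes r s :: "'a :: field mat"
  assumes r: "r \<in> unitriangular_mat n" and s: "s \<in> unitriangular_mat n" and i: "Suc (Suc i) < n"
    and "(2 :: 'a) \<noteq> 0"
    and ne: "r $$ (i, Suc i) * s $$ (Suc i, Suc (Suc i)) \<noteq> s $$ (i, Suc i) * r $$ (Suc i, Suc (Suc i))"
  shows "conj_mat r (conj_mat s (conj_mat r s)) \<noteq> s"
proof
  define w where "w = r * (s * r)"
  have sr: "s * r \<in> unitriangular_mat n" using unitriangular_mult[OF s r] .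
  have w: "w \<in> unitriangular_mat n" unfolding w_def using unitriangular_mult[OF r sr] .
  note inv = unitriangular_mat_invertible
  have "conj_mat r (conj_mat s (conj_mat r s)) = conj_mat w s"
    using conj_mat_mult[OF inv[OF s] inv[OF r], of s] conj_mat_mult[OF inv[OF r] inv[OF sr], of s]
      unitriangular_matD(1)[OF s] by (simp add: w_def)
  moreover assume "conj_mat r (conj_mat s (conj_mat r s)) = s"
  ultimately have "w * s = s * w"
    using conj_mat_eq_iff[of w n s s] inv[OF w] unitriangular_matD(1)[OF s] by simp
  then have "w $$ (i, Suc i) * s $$ (Suc i, Suc (Suc i)) = s $$ (i, Suc i) * w $$ (Suc i, Suc (Suc i))"
    by (rule unitriangular_commute_superdiag[OF w s i])
  moreover have "w $$ (j, Suc j) = r $$ (j, Suc j) + s $$ (j, Suc j) + r $$ (j, Suc j)"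
    if "Suc j < n" for j
    using unitriangular_mult_superdiag[OF r sr that] unitriangular_mult_superdiag[OF s r that]
    by (simp add: w_def add.assoc)
  ultimately have "2 * (r $$ (i, Suc i) * s $$ (Suc i, Suc (Suc i)))
      = 2 * (s $$ (i, Suc i) * r $$ (Suc i, Suc (Suc i)))"
    using i by (simp add: algebra_simps)
  then show False using \<open>(2 :: 'a) \<noteq> 0\<close> ne by simp
qed

lemma rack_type_D_conj_class_SL_if_unitriangular:
  fixes u :: "'a :: field mat"
  assumes u: "u \<in> carrier_mat n n"
    and r: "r \<in> conj_class_SL n u" "r \<in> unitriangular_mat n"
    and s: "s \<in> conj_class_SL n u" "s \<in> unitriangular_mat n"
    and i: "Suc (Suc i) < n" and "(2 :: 'a) \<noteq> 0"
    and distinct: "r $$ (Suc i, Suc (Suc i)) \<noteq> s $$ (Suc i, Suc (Suc i))"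
    and non_commuting: "r $$ (i, Suc i) * s $$ (Suc i, Suc (Suc i)) \<noteq> s $$ (i, Suc i) * r $$ (Suc i, Suc (Suc i))"
  shows "rack_type_D conj_mat (conj_class_SL n u)"
proof (rule rack_type_D_if_invariant_parts)
  let ?R = "unitriangular_orbit n r" and ?S = "unitriangular_orbit n s"
  have carrier: "r \<in> carrier_mat n n" "s \<in> carrier_mat n n"
    using r(2) s(2) by (auto dest: unitriangular_matD)
  show "?R \<union> ?S \<subseteq> conj_class_SL n u"
    using unitriangular_orbit_subset_conj_class_SL u r(1) s(1) by blast
  show "?R \<inter> ?S = {}"
    using unitriangular_orbit_superdiag[OF _ r(2) i] unitriangular_orbit_superdiag[OF _ s(2) i] distinct
    by fastforce
  show "r \<in> ?R" "s \<in> ?S" using unitriangular_orbit_self carrier by blast+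
  have "y \<in> unitriangular_mat n" if "y \<in> ?R \<union> ?S" for y
    using that unitriangular_orbit_subset r(2) s(2) by blast
  then show "conj_mat y ` ?R = ?R" "conj_mat y ` ?S = ?S" if "y \<in> ?R \<union> ?S" for y
    using conj_mat_image_unitriangular_orbit carrier that by blast+
  show "conj_mat r (conj_mat s (conj_mat r s)) \<noteq> s"
    using conj_mat_braid_unitriangular_ne r(2) s(2) i \<open>(2 :: 'a) \<noteq> 0\<close> non_commuting by blast
qed

lemma jordan_matrix_unitriangular:
  assumes "\<forall>p \<in> set n_as. snd p = (1 :: 'a :: field)"
  shows "jordan_matrix n_as \<in> unitriangular_mat (sum_list (map fst n_as))"
proof -
  have "jordan_matrix n_as $$ (i, i) = 1" if "i < sum_list (map fst n_as)" for i
    using assms that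
  proof (induction n_as arbitrary: i)
    case (Cons p n_as)
    obtain l a where p: "p = (l, a)" by (cases p)
    then show ?case
      using Cons.IH[of "i - l"] Cons.prems by (cases "i < l") (auto simp: jordan_matrix_Cons)
  qed simp
  then show ?thesis
    by (auto simp: unitriangular_mat_def jordan_matrix_upper_triangular)
qed

lemma two_neq_zero_if_odd_card:
  assumes "odd (card (UNIV :: 'a :: {finite, ring_1} set))"
  shows "(2 :: 'a) \<noteq> 0"
proof
  assume "(2 :: 'a) = 0"
  then have "CHAR('a) dvd 2"
    using of_nat_eq_0_iff_char_dvd[where 'a = 'a, of 2] by simp
  then have "CHAR('a) = 2"
    using CHAR_not_1[where 'a = 'a] two_is_prime_nat by (auto simp: prime_nat_iff)
  then show False
    using CHAR_dvd_CARD[where 'a = 'a] assms by simp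
qed

lemma unipotent_of_type_similar_unitriangular:
  fixes u :: "'a :: field mat"
  assumes "unipotent_of_type n u lam" and "lam ! 0 > 2"
  obtains J where "similar_mat u J" "J \<in> unitriangular_mat n" "Suc (Suc 0) < n"
    "J $$ (0, Suc 0) = 1" "J $$ (Suc 0, Suc (Suc 0)) = 1"
proof
  define J where "J = jordan_matrix (map (\<lambda>l. (l, 1 :: 'a)) lam)"
  obtain l rest where lam: "lam = l # rest" and "l \<ge> 3"
    using assms by (cases lam) (auto simp: unipotent_of_type_def)
  have "u \<in> carrier_mat n n" and similar: "similar_mat u J"
    using assms(1) by (auto simp: unipotent_of_type_def jordan_nf_def J_def)
  then have "dim_row J = n"
    using similar_matD[OF similar] by fastforce
  then have "n = sum_list lam" by (simp add: J_def comp_def)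
  then show "similar_mat u J" "J \<in> unitriangular_mat n" "Suc (Suc 0) < n"
    using similar jordan_matrix_unitriangular[of "map (\<lambda>l. (l, 1 :: 'a)) lam"] \<open>l \<ge> 3\<close>
    by (auto simp: J_def lam comp_def)
  show "J $$ (0, Suc 0) = 1" "J $$ (Suc 0, Suc (Suc 0)) = 1"
    using \<open>l \<ge> 3\<close> by (simp_all add: J_def lam jordan_matrix_Cons)
qed

lemma conj_class_SL_unitriangular_pair:
  fixes u :: "'a :: field mat"
  assumes u: "u \<in> carrier_mat n n" and "similar_mat u J" and J: "J \<in> unitriangular_mat n"
    and n: "Suc (Suc 0) < n" and J_superdiag: "J $$ (0, Suc 0) = 1" "J $$ (Suc 0, Suc (Suc 0)) = 1"
  obtains c r s where "c \<noteq> 0"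
    "r \<in> conj_class_SL n u" "r \<in> unitriangular_mat n" "r $$ (0, Suc 0) = c" "r $$ (Suc 0, Suc (Suc 0)) = 1"
    "s \<in> conj_class_SL n u" "s \<in> unitriangular_mat n" "s $$ (0, Suc 0) = c" "s $$ (Suc 0, Suc (Suc 0)) = -1"
proof -
  obtain c where "c \<noteq> 0" and in_class: "\<And>d. (\<And>i. i < n \<Longrightarrow> d i \<noteq> 0) \<Longrightarrow> prod d {0..<n} = c
      \<Longrightarrow> conj_mat (mat_diag n d) J \<in> conj_class_SL n u"
    using similar_mat_diag_conj_mem_conj_class_SL[OF u \<open>similar_mat u J\<close>] by blast
  define d1 where "d1 i = (if i = 0 then c else 1)" for i :: nat
  define d2 where "d2 i = (if i = 0 then - c else if i = 1 then -1 else 1)" for i :: nat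
  have d: "d1 i \<noteq> 0" "d2 i \<noteq> 0" for i
    using \<open>c \<noteq> 0\<close> by (auto simp: d1_def d2_def)
  have prod_d: "prod d1 {0..<n} = c" "prod d2 {0..<n} = c"
    using n by (simp_all add: d1_def d2_def prod.If_cases)
  note J_carrier = unitriangular_matD(1)[OF J]
  show thesis
  proof
    show "c \<noteq> 0" by fact
    show "conj_mat (mat_diag n d1) J \<in> conj_class_SL n u" "conj_mat (mat_diag n d2) J \<in> conj_class_SL n u"
      using in_class[OF d(1) prod_d(1)] in_class[OF d(2) prod_d(2)] .
    show "conj_mat (mat_diag n d1) J \<in> unitriangular_mat n" "conj_mat (mat_diag n d2) J \<in> unitriangular_mat n"
      using conj_mat_diag_unitriangular[OF d(1) J] conj_mat_diag_unitriangular[OF d(2) J] .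
    show "conj_mat (mat_diag n d1) J $$ (0, Suc 0) = c" "conj_mat (mat_diag n d1) J $$ (Suc 0, Suc (Suc 0)) = 1"
      using n J_superdiag by (simp_all add: conj_mat_diag_index[OF d(1) J_carrier] d1_def)
    show "conj_mat (mat_diag n d2) J $$ (0, Suc 0) = c" "conj_mat (mat_diag n d2) J $$ (Suc 0, Suc (Suc 0)) = -1"
      using n J_superdiag by (simp_all add: conj_mat_diag_index[OF d(2) J_carrier] d2_def)
  qed
qed

theorem mainTheorem9:
  fixes u :: "'a :: {finite, field} mat" and n :: nat and lam :: "nat list"
  assumes "odd (card (UNIV :: 'a set))"
    and "n \<ge> 2"
    and "u \<in> SL_mat n"
    and "unipotent_of_type n u lam"
    and "lam ! 0 > 2"
  shows "rack_type_D conj_mat (conj_class_SL n u)"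
proof -
  have two: "(2 :: 'a) \<noteq> 0" using two_neq_zero_if_odd_card[OF assms(1)] .
  have u: "u \<in> carrier_mat n n" using assms(3) by (simp add: SL_mat_def)
  obtain J where "similar_mat u J" "J \<in> unitriangular_mat n" and n: "Suc (Suc 0) < n"
    and "J $$ (0, Suc 0) = 1" "J $$ (Suc 0, Suc (Suc 0)) = 1"
    using unipotent_of_type_similar_unitriangular[OF assms(4,5)] by blast
  then obtain c r s where "c \<noteq> 0"
    "r \<in> conj_class_SL n u" "r \<in> unitriangular_mat n" "r $$ (0, Suc 0) = c" "r $$ (Suc 0, Suc (Suc 0)) = 1"
    "s \<in> conj_class_SL n u" "s \<in> unitriangular_mat n" "s $$ (0, Suc 0) = c" "s $$ (Suc 0, Suc (Suc 0)) = -1"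
    using conj_class_SL_unitriangular_pair[OF u] by metis
  moreover have "(1 :: 'a) \<noteq> -1" "c * -1 \<noteq> c * 1"
    using two \<open>c \<noteq> 0\<close>
    by (metis add_eq_0_iff one_add_one, metis mult_2 mult_eq_0_iff add_eq_0_iff mult_minus1_right mult_1_right)
  ultimately show ?thesis
    using rack_type_D_conj_class_SL_if_unitriangular[OF u _ _ _ _ n two, of r s] by simp
qed

end
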